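(* Let $S$ be an instance of Max $r(n)$-Lin-2 AA with parameter $k$, in $n$ variables, in which no two equations have the same left-hand side (i.e. $\alpha_j\neq\alpha_p$ for all $j\neq p$). If $n\ge 2^{k}\,r(n)$, then $S$ is a YES-instance.
   Context: Max $r(n)$-Lin-2 AA: for a fixed function $r(n)$, an instance is a system $S$ of $m$ linear equations over $\mathbb{F}_2$ in variables $z_1,\dots,z_n$, Equation $j$ being $\sum_{i\in\alpha_j} z_i=b_j$ with $\emptyset\neq\alpha_j\subseteq\{1,\dots,n\}$, $|\alpha_j|\le r=r(n)$, $b_j\in\mathbb{F}_2$, and a positive integer weight $w_j$; together with a nonnegative integer parameter $k$. It is assumed that every variable appears in at least one equation. Let $W=w_1+\cdots+w_m$. The instance is a YES-instance if some assignment satisfies equations of total weight at least $(W+k)/2$. *)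

theory Defs
  imports Complex_Main
begin

text \<open>An equation sum_{i in alpha} z_i = b over GF(2); an assignment is z :: nat => bool
  (True = 1), b :: bool.\<close>
definition eq_sat :: "(nat \<Rightarrow> bool) \<Rightarrow> nat set \<Rightarrow> bool \<Rightarrow> bool" where
  "eq_sat z \<alpha> b \<longleftrightarrow> (odd (card {i \<in> \<alpha>. z i}) \<longleftrightarrow> b)"

definition sat_weight :: "nat \<Rightarrow> (nat \<Rightarrow> nat set) \<Rightarrow> (nat \<Rightarrow> bool) \<Rightarrow> (nat \<Rightarrow> nat)
    \<Rightarrow> (nat \<Rightarrow> bool) \<Rightarrow> nat" where
  "sat_weight m \<alpha> b w z = (\<Sum>j\<in>{j. j < m \<and> eq_sat z (\<alpha> j) (b j)}. w j)"

definition lin2_instance :: "(nat \<Rightarrow> nat) \<Rightarrow> nat \<Rightarrow> nat \<Rightarrow> (nat \<Rightarrow> nat set)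
    \<Rightarrow> (nat \<Rightarrow> nat) \<Rightarrow> bool" where
  "lin2_instance r n m \<alpha> w \<longleftrightarrow>
     (\<forall>j<m. \<alpha> j \<noteq> {} \<and> \<alpha> j \<subseteq> {1..n} \<and> card (\<alpha> j) \<le> r n \<and> 0 < w j) \<and>
     (\<forall>i\<in>{1..n}. \<exists>j<m. i \<in> \<alpha> j)"

definition yes_instance :: "nat \<Rightarrow> (nat \<Rightarrow> nat set) \<Rightarrow> (nat \<Rightarrow> bool) \<Rightarrow> (nat \<Rightarrow> nat)
    \<Rightarrow> nat \<Rightarrow> bool" where
  "yes_instance m \<alpha> b w k \<longleftrightarrow>
     (\<exists>z. real (sat_weight m \<alpha> b w z) \<ge> (real (\<Sum>j<m. w j) + real k) / 2)"

end

theory Submission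
  imports Defs
begin

(*
  Proof strategy (Fourier analysis on the Boolean cube, following the "Max-Lin above
  average" kernelization argument).  An assignment is identified with the set A of
  variables set to 1, and an instance with the integer function
     f(A) = sum_S c(S) * (-1)^|S \<inter> A|,
  where c(S) is the signed total weight of the equations with left-hand side S;
  then f(A) = 2 * (satisfied weight) - W.  We prove, for any coefficient function c
  supported on nonempty sets of size at most R:

     if  2^k * R < |vars c| + 2R  then  f(A) >= k  for some A.

  For k = 0 this holds because f has mean zero over all A.  For the induction step
  we eliminate a variable p of minimum degree using a largest set S1 containing p:
  the new coefficient function c' has sets of size at most 2R, loses at most 2R
  variables, and every value of f' is exceeded by some value of f by |c(S1)| >= 1.
  When no two equations share a left-hand side, every variable of the instance
  occurs in vars c, so n >= 2^k * r(n) gives the hypothesis and the theorem follows.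
*)

subsection \<open>Characters of the Boolean cube\<close>

definition chi :: "nat set \<Rightarrow> nat set \<Rightarrow> int" where
  "chi S A = (-1) ^ card (S \<inter> A)"

lemma neg_one_power_card_sym_diff:
  assumes "finite X" "finite Y"
  shows "(-1::int) ^ card (sym_diff X Y) = (-1) ^ card X * (-1) ^ card Y"
proof -
  have "sym_diff X Y = (X \<union> Y) - (X \<inter> Y)" by auto
  hence "card (sym_diff X Y) = card (X \<union> Y) - card (X \<inter> Y)"
    using assms by (metis Int_lower1 card_Diff_subset finite_Int le_supI1)
  moreover have "card (X \<inter> Y) \<le> card (X \<union> Y)" using assms by (intro card_mono) auto
  ultimately have "card (sym_diff X Y) + 2 * card (X \<inter> Y) = card X + card Y"
    using card_Un_Int[OF assms] by linarith
  hence "(-1::int) ^ (card (sym_diff X Y) + 2 * card (X \<inter> Y)) = (-1) ^ (card X + card Y)"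
    by simp
  thus ?thesis by (simp add: power_add power_mult)
qed

lemma chi_sym_diff_left:
  assumes "finite X" "finite Y"
  shows "chi (sym_diff X Y) A = chi X A * chi Y A"
proof -
  have "sym_diff X Y \<inter> A = sym_diff (X \<inter> A) (Y \<inter> A)" by auto
  thus ?thesis
    unfolding chi_def using neg_one_power_card_sym_diff[of "X \<inter> A" "Y \<inter> A"] assms by simp
qed

lemma chi_sym_diff_right:
  assumes "finite S"
  shows "chi S (sym_diff X Y) = chi S X * chi S Y"
proof -
  have "S \<inter> sym_diff X Y = sym_diff (S \<inter> X) (S \<inter> Y)" by auto
  thus ?thesis
    unfolding chi_def using neg_one_power_card_sym_diff[of "S \<inter> X" "S \<inter> Y"] assms by simp
qed

lemma chi_cases: "chi S A = 1 \<or> chi S A = -1"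
  unfolding chi_def by (cases "even (card (S \<inter> A))") auto

text \<open>Orthogonality: a nonconstant character sums to zero over the cube; pair A with A + {i}.\<close>
lemma sum_chi_Pow:
  assumes "finite V" "S \<subseteq> V" "i \<in> S"
  shows "(\<Sum>A\<in>Pow V. chi S A) = 0"
proof -
  define V0 where "V0 = V - {i}"
  have V: "V = insert i V0" "i \<notin> V0" using assms unfolding V0_def by auto
  have inj: "inj_on (insert i) (Pow V0)"
    using V unfolding inj_on_def by (metis Pow_iff insert_ident subset_iff)
  have flip: "chi S (insert i A) = - chi S A" if "A \<in> Pow V0" for A
  proof -
    have "S \<inter> insert i A = insert i (S \<inter> A)" "i \<notin> S \<inter> A" using assms V that by auto
    moreover have "finite (S \<inter> A)" using assms by (meson finite_Int finite_subset)
    ultimately show ?thesis unfolding chi_def by simp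
  qed
  have "(\<Sum>A\<in>Pow V. chi S A) = (\<Sum>A\<in>Pow V0. chi S A) + (\<Sum>A\<in>insert i ` Pow V0. chi S A)"
    unfolding V(1) Pow_insert using V assms(1) by (intro sum.union_disjoint) auto
  also have "(\<Sum>A\<in>insert i ` Pow V0. chi S A) = (\<Sum>A\<in>Pow V0. chi S (insert i A))"
    by (simp add: sum.reindex[OF inj])
  also have "\<dots> = (\<Sum>A\<in>Pow V0. - chi S A)" using flip by (rule sum.cong[OF refl])
  finally show ?thesis by (simp add: sum_negf)
qed

subsection \<open>Pseudo-Boolean functions given by their Fourier coefficients\<close>

definition fourier :: "nat set \<Rightarrow> (nat set \<Rightarrow> int) \<Rightarrow> nat set \<Rightarrow> int" where
  "fourier V c A = (\<Sum>S\<in>Pow V. c S * chi S A)"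

definition low_degree :: "nat set \<Rightarrow> nat \<Rightarrow> (nat set \<Rightarrow> int) \<Rightarrow> bool" where
  "low_degree V R c \<longleftrightarrow> (\<forall>S. c S \<noteq> 0 \<longrightarrow> S \<subseteq> V \<and> S \<noteq> {} \<and> card S \<le> R)"

definition vars :: "(nat set \<Rightarrow> int) \<Rightarrow> nat set" where
  "vars c = {y. \<exists>S. c S \<noteq> 0 \<and> y \<in> S}"

definition var_degree :: "(nat set \<Rightarrow> int) \<Rightarrow> nat \<Rightarrow> nat" where
  "var_degree c y = card {S. c S \<noteq> 0 \<and> y \<in> S}"

lemma low_degree_finite_support:
  assumes "finite V" "low_degree V R c"
  shows "finite {S. c S \<noteq> 0}"
  using assms unfolding low_degree_def by (auto intro: finite_subset[of _ "Pow V"])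

lemma low_degree_vars: "low_degree V R c \<Longrightarrow> vars c \<subseteq> V"
  unfolding low_degree_def vars_def by auto

text \<open>A function without constant term has mean zero, hence is nonnegative somewhere.\<close>
lemma fourier_nonneg_somewhere:
  assumes "finite V" "low_degree V R c"
  shows "\<exists>A\<subseteq>V. 0 \<le> fourier V c A"
proof (rule ccontr)
  assume "\<not> ?thesis"
  hence "(\<Sum>A\<in>Pow V. fourier V c A) < (\<Sum>A\<in>Pow V. 0)"
    using assms(1) by (intro sum_strict_mono) auto
  moreover have "(\<Sum>A\<in>Pow V. fourier V c A) = (\<Sum>S\<in>Pow V. c S * (\<Sum>A\<in>Pow V. chi S A))"
    unfolding fourier_def by (subst sum.swap) (simp add: sum_distrib_left)
  moreover have "c S * (\<Sum>A\<in>Pow V. chi S A) = 0" for S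
  proof (cases "c S = 0")
    case False
    then obtain i where "S \<subseteq> V" "i \<in> S" using assms(2) unfolding low_degree_def by auto
    thus ?thesis using sum_chi_Pow[OF assms(1)] by simp
  qed simp
  ultimately show False by simp
qed

lemma fourier_flip_unused_var:
  assumes "\<And>T. c T \<noteq> 0 \<Longrightarrow> p \<notin> T"
  shows "fourier V c (sym_diff A {p}) = fourier V c A"
  unfolding fourier_def
proof (rule sum.cong[OF refl])
  fix T
  have "c T \<noteq> 0 \<Longrightarrow> T \<inter> sym_diff A {p} = T \<inter> A" using assms by auto
  thus "c T * chi T (sym_diff A {p}) = c T * chi T A" unfolding chi_def by fastforce
qed

subsection \<open>Eliminating a variable\<close>

text \<open>Using the identity chi(T + S1) = sigma * chi(T) on assignments with chi(S1) = sigma,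
  every support set containing p is merged into the set T = S + S1 not containing p.\<close>
definition eliminate :: "(nat set \<Rightarrow> int) \<Rightarrow> nat \<Rightarrow> nat set \<Rightarrow> int \<Rightarrow> nat set \<Rightarrow> int" where
  "eliminate c p S1 \<sigma> T = (if p \<in> T \<or> T = {} then 0 else c T + \<sigma> * c (sym_diff T S1))"

lemma eliminate_low_degree:
  assumes fin: "finite V" and wf: "low_degree V R c" and S1: "S1 \<subseteq> V" "card S1 \<le> R"
  shows "low_degree V (2 * R) (eliminate c p S1 \<sigma>)"
  unfolding low_degree_def
proof (intro allI impI)
  fix T assume T: "eliminate c p S1 \<sigma> T \<noteq> 0"
  hence ne: "T \<noteq> {}" and cT: "c T \<noteq> 0 \<or> c (sym_diff T S1) \<noteq> 0"
    unfolding eliminate_def by (auto split: if_splits)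
  have "T \<subseteq> V \<and> card T \<le> 2 * R"
  proof (cases "c T \<noteq> 0")
    case True thus ?thesis using wf unfolding low_degree_def by force
  next
    case False
    hence sv: "sym_diff T S1 \<subseteq> V" "card (sym_diff T S1) \<le> R"
      using cT wf unfolding low_degree_def by auto
    have sub: "T \<subseteq> sym_diff T S1 \<union> S1" by auto
    have "finite (sym_diff T S1 \<union> S1)" using sv S1 fin by (auto intro: finite_subset)
    hence "card T \<le> card (sym_diff T S1) + card S1"
      using card_mono[OF _ sub] card_Un_le by (meson order_trans)
    thus ?thesis using sub sv S1 by auto
  qed
  thus "T \<subseteq> V \<and> T \<noteq> {} \<and> card T \<le> 2 * R" using ne by simp
qed

lemma eliminate_apply:
  "p \<notin> T \<Longrightarrow> T \<noteq> {} \<Longrightarrow> eliminate c p S1 \<sigma> T = c T + \<sigma> * c (sym_diff T S1)"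
  unfolding eliminate_def by simp

lemma eliminate_avoids: "eliminate c p S1 \<sigma> T \<noteq> 0 \<Longrightarrow> p \<notin> T"
  unfolding eliminate_def by (auto split: if_splits)

lemma fourier_eliminate:
  assumes fin: "finite V" and wf: "low_degree V R c" and S1: "S1 \<subseteq> V" "p \<in> S1"
    and A: "A \<subseteq> V" "chi S1 A = \<sigma>"
  shows "fourier V c A = \<sigma> * c S1 + fourier V (eliminate c p S1 \<sigma>) A"
proof -
  have finS1: "finite S1" using S1 fin finite_subset by blast
  define P0 where "P0 = {T\<in>Pow V. p \<notin> T}"
  define P1 where "P1 = {T\<in>Pow V. p \<in> T}"
  have fP: "finite P0" "finite P1" using fin unfolding P0_def P1_def by auto
  have "Pow V = P0 \<union> P1" "P0 \<inter> P1 = {}" unfolding P0_def P1_def by auto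
  hence "fourier V c A = (\<Sum>S\<in>P0. c S * chi S A) + (\<Sum>S\<in>P1. c S * chi S A)"
    unfolding fourier_def using fP by (simp add: sum.union_disjoint)
  also have "(\<Sum>S\<in>P1. c S * chi S A) = (\<Sum>T\<in>P0. c (sym_diff T S1) * chi (sym_diff T S1) A)"
  proof -
    have "P1 = (\<lambda>T. sym_diff T S1) ` P0"
      using S1 unfolding P0_def P1_def by (auto intro!: image_eqI[of _ _ "sym_diff _ S1"])
    moreover have "inj_on (\<lambda>T. sym_diff T S1) P0" by (rule inj_onI) blast
    ultimately show ?thesis using sum.reindex by (simp add: comp_def)
  qed
  also have "\<dots> = (\<Sum>T\<in>P0. \<sigma> * c (sym_diff T S1) * chi T A)"
  proof (rule sum.cong[OF refl])
    fix T assume "T \<in> P0"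
    hence "finite T" using fin unfolding P0_def by (auto intro: finite_subset)
    hence "chi (sym_diff T S1) A = \<sigma> * chi T A" using chi_sym_diff_left[OF _ finS1] A(2) by simp
    thus "c (sym_diff T S1) * chi (sym_diff T S1) A = \<sigma> * c (sym_diff T S1) * chi T A" by simp
  qed
  also have "(\<Sum>S\<in>P0. c S * chi S A) + \<dots> = (\<Sum>T\<in>P0. (c T + \<sigma> * c (sym_diff T S1)) * chi T A)"
    by (simp add: sum.distrib[symmetric] algebra_simps)
  also have "\<dots> = \<sigma> * c S1 + (\<Sum>T\<in>P0 - {{}}. (c T + \<sigma> * c (sym_diff T S1)) * chi T A)"
  proof -
    have "{} \<in> P0" "c {} = 0" using wf unfolding P0_def low_degree_def by auto
    thus ?thesis
      using sum.remove[OF fP(1) \<open>{} \<in> P0\<close>, of "\<lambda>T. (c T + \<sigma> * c (sym_diff T S1)) * chi T A"]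
      by (simp add: chi_def)
  qed
  also have "(\<Sum>T\<in>P0 - {{}}. (c T + \<sigma> * c (sym_diff T S1)) * chi T A)
      = fourier V (eliminate c p S1 \<sigma>) A"
    unfolding fourier_def
    by (rule sum.mono_neutral_cong_left) (use fin in \<open>auto simp: P0_def eliminate_def\<close>)
  finally show ?thesis .
qed

text \<open>Every value of the eliminated function is attained, up to sigma * c S1, by the
  original one: fix chi S1 = sigma by flipping p, which the new function ignores.\<close>
lemma eliminate_gain:
  assumes fin: "finite V" and wf: "low_degree V R c" and S1: "S1 \<subseteq> V" "p \<in> S1"
    and sign: "\<sigma> = 1 \<or> \<sigma> = -1" and A': "A' \<subseteq> V"
  shows "\<exists>A\<subseteq>V. fourier V c A = \<sigma> * c S1 + fourier V (eliminate c p S1 \<sigma>) A'"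
proof -
  define A where "A = (if chi S1 A' = \<sigma> then A' else sym_diff A' {p})"
  have AV: "A \<subseteq> V" using A' S1 unfolding A_def by auto
  have finS1: "finite S1" using S1 fin by (auto intro: finite_subset)
  have "chi S1 {p} = -1" using S1 unfolding chi_def by (simp add: Int_absorb1)
  hence "chi S1 (sym_diff A' {p}) = - chi S1 A'" using chi_sym_diff_right[OF finS1] by simp
  hence "chi S1 A = \<sigma>" using sign chi_cases[of S1 A'] unfolding A_def by auto
  moreover have "fourier V (eliminate c p S1 \<sigma>) A = fourier V (eliminate c p S1 \<sigma>) A'"
    unfolding A_def using fourier_flip_unused_var[OF eliminate_avoids] by simp
  ultimately show ?thesis using fourier_eliminate[OF fin wf S1 AV] AV by metis
qed

subsection \<open>Elimination loses few variables\<close>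

lemma double_counting:
  fixes X :: "'a set" and Y :: "'a set set"
  assumes "finite X" "finite Y"
  shows "(\<Sum>x\<in>X. card {A\<in>Y. x \<in> A}) = (\<Sum>A\<in>Y. card (A \<inter> X))"
proof -
  have "(\<Sum>x\<in>X. card {A\<in>Y. x \<in> A}) = (\<Sum>x\<in>X. \<Sum>A\<in>Y. if x \<in> A then 1 else 0)"
    using assms by (simp add: sum.If_cases Int_def)
  also have "\<dots> = (\<Sum>A\<in>Y. \<Sum>x\<in>X. if x \<in> A then 1 else 0)" by (rule sum.swap)
  also have "\<dots> = (\<Sum>A\<in>Y. card (A \<inter> X))"
    using assms by (simp add: sum.If_cases Int_def conj_commute)
  finally show ?thesis .
qed

lemma card_diff_le_sym_diff:
  assumes "finite A" "finite B" "card A \<le> card B"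
  shows "2 * card (A - B) \<le> card (sym_diff A B)"
proof -
  have "card (sym_diff A B) = card (A - B) + card (B - A)"
    using assms by (intro card_Un_disjoint) auto
  moreover have "card A = card (A \<inter> B) + card (A - B)" "card B = card (A \<inter> B) + card (B - A)"
    using card_Int_Diff[OF assms(1), of B] card_Int_Diff[OF assms(2), of A]
    by (simp_all add: Int_commute)
  ultimately show ?thesis using assms(3) by linarith
qed

text \<open>A variable y outside S1 that disappears under elimination has its support sets
  paired up by S \<mapsto> S + S1: otherwise the merged coefficient of the set avoiding p
  would be nonzero.\<close>
lemma lost_var_pairing:
  assumes nonzero: "\<sigma> \<noteq> 0" and p: "p \<in> S1"
    and y: "y \<notin> S1" "y \<notin> vars (eliminate c p S1 \<sigma>)"
    and S: "c S \<noteq> 0" "y \<in> S"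
  shows "c (sym_diff S S1) \<noteq> 0"
proof -
  have vanish: "eliminate c p S1 \<sigma> T = 0" if "y \<in> T" for T
    using y(2) that unfolding vars_def by auto
  show ?thesis
  proof (cases "p \<in> S")
    case False
    have "S \<noteq> {}" using S(2) by blast
    hence "c S + \<sigma> * c (sym_diff S S1) = 0"
      using vanish[OF S(2)] eliminate_apply[OF False] by simp
    thus ?thesis using S(1) by auto
  next
    case True
    have T: "y \<in> sym_diff S S1" "p \<notin> sym_diff S S1" "sym_diff (sym_diff S S1) S1 = S"
      using True S y p by auto
    have ne: "sym_diff S S1 \<noteq> {}" using T(1) by blast
    have "eliminate c p S1 \<sigma> (sym_diff S S1) = c (sym_diff S S1) + \<sigma> * c S"
      using eliminate_apply[OF T(2) ne, of c S1 \<sigma>] unfolding T(3) .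
    hence "c (sym_diff S S1) + \<sigma> * c S = 0" using vanish[OF T(1)] by simp
    thus ?thesis using S(1) nonzero by auto
  qed
qed

lemma lost_var_degree:
  assumes fin: "finite {S. c S \<noteq> 0}" and nonzero: "\<sigma> \<noteq> 0" and p: "p \<in> S1"
    and y: "y \<notin> S1" "y \<notin> vars (eliminate c p S1 \<sigma>)"
  shows "var_degree c y = 2 * card {S. c S \<noteq> 0 \<and> y \<in> S \<and> p \<in> S}"
proof -
  define Fy where "Fy = {S. c S \<noteq> 0 \<and> y \<in> S}"
  define Fyp where "Fyp = {S. c S \<noteq> 0 \<and> y \<in> S \<and> p \<in> S}"
  have "bij_betw (\<lambda>S. sym_diff S S1) Fyp (Fy - Fyp)"
    by (rule bij_betw_byWitness[where f'="\<lambda>S. sym_diff S S1"])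
      (use lost_var_pairing[OF nonzero p y] y p in \<open>auto simp: Fy_def Fyp_def\<close>)
  moreover have "card Fy = card Fyp + card (Fy - Fyp)"
  proof -
    have sub: "Fyp \<subseteq> Fy" and finFy: "finite Fy"
      using fin unfolding Fy_def Fyp_def by (auto intro: finite_subset)
    thus ?thesis using card_Diff_subset[OF finite_subset[OF sub finFy] sub] card_mono[OF finFy sub]
      by linarith
  qed
  ultimately show ?thesis
    unfolding var_degree_def Fy_def[symmetric] Fyp_def[symmetric]
    using bij_betw_same_card by fastforce
qed

text \<open>With p of minimum degree and S1 a largest support set containing p, at most
  |S1| + R \<le> 2R variables disappear: double counting incidences between the lost
  variables L and the sets containing p gives deg(p) * |L| \<le> deg(p) * R.\<close>
lemma eliminate_vars:
  assumes fin: "finite V" and wf: "low_degree V R c"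
    and p: "p \<in> vars c" and p_min: "\<And>y. y \<in> vars c \<Longrightarrow> var_degree c p \<le> var_degree c y"
    and S1: "c S1 \<noteq> 0" "p \<in> S1" and S1_max: "\<And>S. c S \<noteq> 0 \<Longrightarrow> p \<in> S \<Longrightarrow> card S \<le> card S1"
    and nonzero: "\<sigma> \<noteq> 0"
  shows "card (vars c) \<le> card (vars (eliminate c p S1 \<sigma>)) + 2 * R"
proof -
  define c' where "c' = eliminate c p S1 \<sigma>"
  define L where "L = vars c - S1 - vars c'"
  define Fp where "Fp = {S. c S \<noteq> 0 \<and> p \<in> S}"
  have finF: "finite {S. c S \<noteq> 0}" by (rule low_degree_finite_support[OF fin wf])
  have S1V: "S1 \<subseteq> V" "card S1 \<le> R" "finite S1"
    using wf S1 fin unfolding low_degree_def by (auto intro: finite_subset)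
  have finL: "finite L" using low_degree_vars[OF wf] fin unfolding L_def by (auto intro: finite_subset)
  have finFp: "finite Fp" using finF unfolding Fp_def by (auto intro: finite_subset)
  have Fp_pos: "0 < card Fp" using p finFp unfolding Fp_def vars_def by (auto simp: card_gt_0_iff)
  have y_lost: "y \<notin> S1" "y \<notin> vars c'" if "y \<in> L" for y using that unfolding L_def by auto
  have lost_in_set: "2 * card (A \<inter> L) \<le> R" if A: "A \<in> Fp" for A
  proof (cases "A \<inter> L = {}")
    case False
    then obtain y where "y \<in> A" "y \<in> L" by auto
    hence "c (sym_diff A S1) \<noteq> 0"
      using lost_var_pairing[OF nonzero S1(2) y_lost[unfolded c'_def]] A unfolding Fp_def by auto
    hence "card (sym_diff A S1) \<le> R" using wf unfolding low_degree_def by auto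
    moreover have "finite A" "card A \<le> card S1"
      using A wf fin S1_max unfolding Fp_def low_degree_def by (auto intro: finite_subset)
    moreover have "card (A \<inter> L) \<le> card (A - S1)"
      using \<open>finite A\<close> by (intro card_mono) (auto simp: L_def)
    ultimately show ?thesis using card_diff_le_sym_diff[of A S1] S1V by linarith
  qed simp
  have "card Fp * card L \<le> (\<Sum>y\<in>L. var_degree c y)"
    using p_min[of y for y] sum_mono[of L "\<lambda>_. card Fp" "var_degree c"]
    unfolding L_def var_degree_def Fp_def by (auto simp: mult.commute)
  also have "\<dots> = (\<Sum>y\<in>L. 2 * card {A\<in>Fp. y \<in> A})"
    using lost_var_degree[OF finF nonzero S1(2) y_lost[unfolded c'_def]]
    by (intro sum.cong) (auto simp: Fp_def conj_ac)
  also have "\<dots> = (\<Sum>A\<in>Fp. 2 * card (A \<inter> L))"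
    using double_counting[OF finL finFp] by (simp add: sum_distrib_left[symmetric])
  also have "\<dots> \<le> card Fp * R" using sum_mono[of Fp _ "\<lambda>_. R"] lost_in_set by simp
  finally have card_L: "card L \<le> R" using Fp_pos by simp
  have "vars c \<subseteq> S1 \<union> L \<union> vars c'" unfolding L_def by auto
  moreover have "finite (vars c')"
    using low_degree_vars[OF eliminate_low_degree[OF fin wf S1V(1,2)]] fin c'_def
    by (auto intro: finite_subset)
  ultimately have "card (vars c) \<le> card S1 + card L + card (vars c')"
    using S1V finL card_mono[of "S1 \<union> L \<union> vars c'" "vars c"] card_Un_le
    by (meson add_le_mono finite_UnI le_refl order_trans)
  thus ?thesis using S1V card_L unfolding c'_def by linarith
qed

subsection \<open>The lower bound for low-degree pseudo-Boolean functions\<close>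

lemma elimination_step:
  assumes fin: "finite V" and wf: "low_degree V R c" and ne: "vars c \<noteq> {}"
  shows "\<exists>c'. low_degree V (2 * R) c' \<and> card (vars c) \<le> card (vars c') + 2 * R \<and>
              (\<forall>A'\<subseteq>V. \<exists>A\<subseteq>V. fourier V c' A' + 1 \<le> fourier V c A)"
proof -
  obtain p where p: "p \<in> vars c" and p_min: "\<And>y. y \<in> vars c \<Longrightarrow> var_degree c p \<le> var_degree c y"
    using ex_has_least_nat[of "\<lambda>y. y \<in> vars c" _ "var_degree c"] ne by blast
  obtain S0 where S0: "c S0 \<noteq> 0 \<and> p \<in> S0" using p unfolding vars_def by blast
  have bounded: "\<forall>S. c S \<noteq> 0 \<and> p \<in> S \<longrightarrow> card S < Suc R"
    using wf unfolding low_degree_def by (simp add: less_Suc_eq_le)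
  obtain S1 where S1: "c S1 \<noteq> 0" "p \<in> S1"
    and largest: "\<forall>S. c S \<noteq> 0 \<and> p \<in> S \<longrightarrow> card S \<le> card S1"
    using ex_has_greatest_nat[OF S0 bounded] by blast
  have S1_max: "\<And>S. c S \<noteq> 0 \<Longrightarrow> p \<in> S \<Longrightarrow> card S \<le> card S1" using largest by blast
  have S1V: "S1 \<subseteq> V" "card S1 \<le> R" using wf S1 unfolding low_degree_def by auto
  define \<sigma> where "\<sigma> = sgn (c S1)"
  have sign: "\<sigma> = 1 \<or> \<sigma> = -1" and nonzero: "\<sigma> \<noteq> 0" and gain: "1 \<le> \<sigma> * c S1"
    using S1(1) unfolding \<sigma>_def by (auto simp: sgn_if)
  show ?thesis
  proof (intro exI[of _ "eliminate c p S1 \<sigma>"] conjI allI impI)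
    show "low_degree V (2 * R) (eliminate c p S1 \<sigma>)" by (rule eliminate_low_degree[OF fin wf S1V])
    show "card (vars c) \<le> card (vars (eliminate c p S1 \<sigma>)) + 2 * R"
      by (rule eliminate_vars[OF fin wf p p_min S1 S1_max nonzero])
    fix A' assume "A' \<subseteq> V"
    then obtain A where "A \<subseteq> V" "fourier V c A = \<sigma> * c S1 + fourier V (eliminate c p S1 \<sigma>) A'"
      using eliminate_gain[OF fin wf S1V(1) S1(2) sign] by blast
    thus "\<exists>A\<subseteq>V. fourier V (eliminate c p S1 \<sigma>) A' + 1 \<le> fourier V c A" using gain by auto
  qed
qed

text \<open>Main estimate, by induction on k: each elimination round raises the guaranteed value
  by 1 while doubling the degree bound and losing at most 2R variables.\<close>
theorem fourier_lower_bound: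
  assumes fin: "finite V"
  shows "low_degree V R c \<Longrightarrow> 1 \<le> R \<Longrightarrow> 2 ^ k * R < card (vars c) + 2 * R
    \<Longrightarrow> \<exists>A\<subseteq>V. int k \<le> fourier V c A"
proof (induction k arbitrary: R c)
  case 0
  then show ?case using fourier_nonneg_somewhere[OF fin] by auto
next
  case (Suc k)
  have "2 * R \<le> 2 ^ Suc k * R" using Suc.prems(2) by simp
  hence "vars c \<noteq> {}" using Suc.prems(3) by auto
  then obtain c' where c': "low_degree V (2 * R) c'" "card (vars c) \<le> card (vars c') + 2 * R"
      "\<forall>A'\<subseteq>V. \<exists>A\<subseteq>V. fourier V c' A' + 1 \<le> fourier V c A"
    using elimination_step[OF fin Suc.prems(1)] by blast
  have "2 ^ k * (2 * R) < card (vars c') + 2 * (2 * R)" using Suc.prems(3) c'(2) by simp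
  then obtain A' where A': "A' \<subseteq> V" "int k \<le> fourier V c' A'"
    using Suc.IH[OF c'(1)] Suc.prems(2) by auto
  then obtain A where "A \<subseteq> V" "fourier V c' A' + 1 \<le> fourier V c A" using c'(3) by blast
  thus ?case using A'(2) by auto
qed

subsection \<open>Linear systems over GF(2) as pseudo-Boolean functions\<close>

text \<open>Coefficient of S: total weight of the equations with left-hand side S, counted
  negatively for right-hand side 1 (chi S A = (-1)^(value of the left-hand side)).\<close>
definition lin2_coeffs :: "nat \<Rightarrow> (nat \<Rightarrow> nat set) \<Rightarrow> (nat \<Rightarrow> bool) \<Rightarrow> (nat \<Rightarrow> nat)
    \<Rightarrow> nat set \<Rightarrow> int" where
  "lin2_coeffs m \<alpha> b w S = (\<Sum>j\<in>{j. j < m \<and> \<alpha> j = S}. if b j then - int (w j) else int (w j))"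

lemma sum_signed_split:
  fixes x :: "nat \<Rightarrow> int"
  shows "(\<Sum>j<m. if P j then x j else - x j) = 2 * (\<Sum>j\<in>{j. j < m \<and> P j}. x j) - (\<Sum>j<m. x j)"
proof -
  have "{..<m} \<inter> {j. P j} = {j. j < m \<and> P j}" "{..<m} \<inter> - {j. P j} = {..<m} - {j. j < m \<and> P j}"
    by auto
  moreover have "(\<Sum>j<m. x j) = (\<Sum>j\<in>{j. j < m \<and> P j}. x j) + (\<Sum>j\<in>{..<m} - {j. j < m \<and> P j}. x j)"
    by (subst sum.subset_diff[of "{j. j < m \<and> P j}"]) auto
  ultimately show ?thesis
    using sum.If_cases[of "{..<m}" P x "\<lambda>j. - x j"] by (simp add: sum_negf)
qed

lemma fourier_lin2_coeffs:
  assumes "finite V" "\<forall>j<m. \<alpha> j \<subseteq> V"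
  shows "fourier V (lin2_coeffs m \<alpha> b w) A
    = 2 * int (sat_weight m \<alpha> b w (\<lambda>i. i \<in> A)) - int (\<Sum>j<m. w j)"
proof -
  have "fourier V (lin2_coeffs m \<alpha> b w) A
      = (\<Sum>S\<in>Pow V. \<Sum>j\<in>{j\<in>{..<m}. \<alpha> j = S}. (if b j then - int (w j) else int (w j)) * chi (\<alpha> j) A)"
    unfolding fourier_def lin2_coeffs_def by (simp add: sum_distrib_right)
  also have "\<dots> = (\<Sum>j<m. (if b j then - int (w j) else int (w j)) * chi (\<alpha> j) A)"
    by (rule sum.group) (use assms in auto)
  also have "\<dots> = (\<Sum>j<m. if eq_sat (\<lambda>i. i \<in> A) (\<alpha> j) (b j) then int (w j) else - int (w j))"
  proof (rule sum.cong[OF refl])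
    fix j
    have "{i \<in> \<alpha> j. i \<in> A} = \<alpha> j \<inter> A" by auto
    thus "(if b j then - int (w j) else int (w j)) * chi (\<alpha> j) A
        = (if eq_sat (\<lambda>i. i \<in> A) (\<alpha> j) (b j) then int (w j) else - int (w j))"
      unfolding chi_def eq_sat_def by (cases "even (card (\<alpha> j \<inter> A))") auto
  qed
  finally show ?thesis
    unfolding sum_signed_split sat_weight_def by (simp add: of_nat_sum)
qed

lemma lin2_coeffs_low_degree:
  assumes "lin2_instance r n m \<alpha> w"
  shows "low_degree {1..n} (r n) (lin2_coeffs m \<alpha> b w)"
  unfolding low_degree_def
proof (intro allI impI)
  fix S assume "lin2_coeffs m \<alpha> b w S \<noteq> 0"
  hence "{j. j < m \<and> \<alpha> j = S} \<noteq> {}" unfolding lin2_coeffs_def by (metis sum.empty)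
  then obtain j where "j < m" "\<alpha> j = S" by blast
  thus "S \<subseteq> {1..n} \<and> S \<noteq> {} \<and> card S \<le> r n" using assms unfolding lin2_instance_def by auto
qed

text \<open>With pairwise distinct left-hand sides no coefficient cancels, so every variable survives.\<close>
lemma lin2_coeffs_vars:
  assumes inst: "lin2_instance r n m \<alpha> w" and distinct: "\<forall>j<m. \<forall>p<m. j \<noteq> p \<longrightarrow> \<alpha> j \<noteq> \<alpha> p"
  shows "vars (lin2_coeffs m \<alpha> b w) = {1..n}"
proof
  show "vars (lin2_coeffs m \<alpha> b w) \<subseteq> {1..n}"
    by (rule low_degree_vars[OF lin2_coeffs_low_degree[OF inst]])
  show "{1..n} \<subseteq> vars (lin2_coeffs m \<alpha> b w)"
  proof
    fix i assume "i \<in> {1..n}"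
    then obtain j where j: "j < m" "i \<in> \<alpha> j" using inst unfolding lin2_instance_def by blast
    have single: "{j'. j' < m \<and> \<alpha> j' = \<alpha> j} = {j}" using distinct j(1) by auto
    have "0 < w j" using inst j(1) unfolding lin2_instance_def by auto
    hence "lin2_coeffs m \<alpha> b w (\<alpha> j) \<noteq> 0" unfolding lin2_coeffs_def single by simp
    thus "i \<in> vars (lin2_coeffs m \<alpha> b w)" using j unfolding vars_def by auto
  qed
qed

theorem lemma3:
  fixes r :: "nat \<Rightarrow> nat" and n m k :: nat
    and \<alpha> :: "nat \<Rightarrow> nat set" and b :: "nat \<Rightarrow> bool" and w :: "nat \<Rightarrow> nat"
  assumes "0 < n"
    and "lin2_instance r n m \<alpha> w"
    and "\<forall>j<m. \<forall>p<m. j \<noteq> p \<longrightarrow> \<alpha> j \<noteq> \<alpha> p"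
    and "n \<ge> 2 ^ k * r n"
  shows "yes_instance m \<alpha> b w k"
proof -
  let ?c = "lin2_coeffs m \<alpha> b w"
  have inst: "\<forall>j<m. \<alpha> j \<noteq> {} \<and> \<alpha> j \<subseteq> {1..n} \<and> card (\<alpha> j) \<le> r n"
    "\<forall>i\<in>{1..n}. \<exists>j<m. i \<in> \<alpha> j"
    using assms(2) unfolding lin2_instance_def by auto
  have "1 \<in> {1..n}" using assms(1) by simp
  then obtain j where j: "j < m" "1 \<in> \<alpha> j" using inst(2) by blast
  hence "finite (\<alpha> j)" "\<alpha> j \<noteq> {}" "card (\<alpha> j) \<le> r n"
    using inst(1) by (auto intro: finite_subset)
  hence R_pos: "1 \<le> r n" by (metis card_0_eq le_trans less_one not_le)
  have "2 ^ k * r n < card (vars ?c) + 2 * r n"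
    using assms(4) R_pos lin2_coeffs_vars[OF assms(2,3)] by simp
  then obtain A where "int k \<le> fourier {1..n} ?c A"
    using fourier_lower_bound[OF _ lin2_coeffs_low_degree[OF assms(2)] R_pos] by blast
  hence "int k \<le> 2 * int (sat_weight m \<alpha> b w (\<lambda>i. i \<in> A)) - int (\<Sum>j<m. w j)"
    using fourier_lin2_coeffs[of "{1..n}"] inst(1) by simp
  hence "real k \<le> 2 * real (sat_weight m \<alpha> b w (\<lambda>i. i \<in> A)) - real (\<Sum>j<m. w j)"
    by linarith
  hence "(real (\<Sum>j<m. w j) + real k) / 2 \<le> real (sat_weight m \<alpha> b w (\<lambda>i. i \<in> A))"
    by simp
  thus ?thesis unfolding yes_instance_def by blast
qed

end
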